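(* Let $\mathcal{H}$ be a complex Hilbert space, $A\in\mathcal{B}(\mathcal{H})$ positive and $S\in\mathcal{B}_A(\mathcal{H})$. Then for every positive integer $n$, $$d\omega_A^{4n}(S)\le 4^{n-1}\left\|\left(S^{\sharp_A}S\right)^n+\left(S^{\sharp_A}S\right)^{2n}\right\|_A\left\|\left(SS^{\sharp_A}\right)^n+\left(S^{\sharp_A}S\right)^{2n}\right\|_A .$$
   Context: $\mathcal{B}(\mathcal{H})$ denotes the bounded linear operators on $\mathcal{H}$. For positive $A$, $\langle x,z\rangle_A=\langle Ax,z\rangle$ and $\|z\|_A=\|A^{1/2}z\|$. $\mathcal{B}_A(\mathcal{H})$ is the set of $S\in\mathcal{B}(\mathcal{H})$ for which some $R\in\mathcal{B}(\mathcal{H})$ satisfies $AR=S^*A$; for such $S$, $S^{\sharp_A}=A^{\dagger}S^*A$ with $A^\dagger$ the Moore–Penrose inverse of $A$. For operators $T$ bounded with respect to $\|\cdot\|_A$: $\|T\|_A=\sup_{\|z\|_A=1}\|Tz\|_A$ and $d\omega_A(T)=\sup_{\|z\|_A=1}(|\langle Tz,z\rangle_A|^2+\|Tz\|_A^4)^{1/2}$. *)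

theory Defs
  imports "HOL-Analysis.Analysis"
begin

class complex_vector = real_vector +
  fixes scaleC :: "complex \<Rightarrow> 'a \<Rightarrow> 'a" (infixr "*\<^sub>C" 75)
  assumes scaleC_add_right: "a *\<^sub>C (x + y) = a *\<^sub>C x + a *\<^sub>C y"
    and scaleC_add_left: "(a + b) *\<^sub>C x = a *\<^sub>C x + b *\<^sub>C x"
    and scaleC_scaleC: "a *\<^sub>C (b *\<^sub>C x) = (a * b) *\<^sub>C x"
    and scaleC_one: "1 *\<^sub>C x = x"
    and scaleR_scaleC: "r *\<^sub>R x = complex_of_real r *\<^sub>C x"

text \<open>Complex inner product, linear in the first and conjugate-linear in the second
  argument; the norm is the one induced by the inner product.\<close>
class complex_inner = complex_vector + real_normed_vector +
  fixes cinner :: "'a \<Rightarrow> 'a \<Rightarrow> complex"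
  assumes cinner_commute: "cinner x y = cnj (cinner y x)"
    and cinner_add_left: "cinner (x + y) z = cinner x z + cinner y z"
    and cinner_scaleC_left: "cinner (r *\<^sub>C x) y = r * cinner x y"
    and norm_eq_sqrt_cinner: "norm x = sqrt (Re (cinner x x))"

text \<open>A complex Hilbert space is a type of sort {complex_inner, complete_space}.\<close>

definition bounded_clinear :: "('a::complex_inner \<Rightarrow> 'a) \<Rightarrow> bool" where
  "bounded_clinear T \<longleftrightarrow> bounded_linear T \<and> (\<forall>c x. T (c *\<^sub>C x) = c *\<^sub>C T x)"

definition adj :: "('a::complex_inner \<Rightarrow> 'a) \<Rightarrow> ('a \<Rightarrow> 'a)" where
  "adj T = (THE T'. \<forall>x y. cinner (T x) y = cinner x (T' y))"

definition positive_op :: "('a::complex_inner \<Rightarrow> 'a) \<Rightarrow> bool" where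
  "positive_op A \<longleftrightarrow> bounded_clinear A \<and>
     (\<forall>x. Im (cinner (A x) x) = 0 \<and> 0 \<le> Re (cinner (A x) x))"

text \<open>Moore--Penrose inverse: for y in its domain R(A) + R(A)^perp, A\<dagger> y is the unique
  x in N(A)^perp with A x = P_{closure R(A)} y, i.e. with A x - y orthogonal to R(A).\<close>
definition mp_inv :: "('a::complex_inner \<Rightarrow> 'a) \<Rightarrow> ('a \<Rightarrow> 'a)" where
  "mp_inv A y = (THE x. (\<forall>z. A z = 0 \<longrightarrow> cinner x z = 0) \<and>
                        (\<forall>w. cinner (A x - y) (A w) = 0))"

definition BA :: "('a::complex_inner \<Rightarrow> 'a) \<Rightarrow> ('a \<Rightarrow> 'a) set" where
  "BA A = {S. bounded_clinear S \<and> (\<exists>R. bounded_clinear R \<and> A \<circ> R = adj S \<circ> A)}"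

definition sharpA :: "('a::complex_inner \<Rightarrow> 'a) \<Rightarrow> ('a \<Rightarrow> 'a) \<Rightarrow> ('a \<Rightarrow> 'a)" where
  "sharpA A S = mp_inv A \<circ> adj S \<circ> A"

definition innerA :: "('a::complex_inner \<Rightarrow> 'a) \<Rightarrow> 'a \<Rightarrow> 'a \<Rightarrow> complex" where
  "innerA A x z = cinner (A x) z"

text \<open>norm_A z = norm (A^{1/2} z) = sqrt (Re <Az,z>).\<close>
definition normA :: "('a::complex_inner \<Rightarrow> 'a) \<Rightarrow> 'a \<Rightarrow> real" where
  "normA A z = sqrt (Re (innerA A z z))"

text \<open>Suprema over the A-unit sphere (all quantities are nonnegative; the convention
  sup of the empty set = 0 is made explicit by inserting 0).\<close>
definition opnormA :: "('a::complex_inner \<Rightarrow> 'a) \<Rightarrow> ('a \<Rightarrow> 'a) \<Rightarrow> real" where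
  "opnormA A T = Sup (insert 0 ((\<lambda>z. normA A (T z)) ` {z. normA A z = 1}))"

definition dwA :: "('a::complex_inner \<Rightarrow> 'a) \<Rightarrow> ('a \<Rightarrow> 'a) \<Rightarrow> real" where
  "dwA A T = Sup (insert 0 ((\<lambda>z. sqrt ((cmod (innerA A (T z) z))\<^sup>2 + (normA A (T z)) ^ 4))
                           ` {z. normA A z = 1}))"

end

(* For an A-unit vector z put a = <S#S z, z>_A = |Sz|_A^2 and b = <SS# z, z>_A = |S#z|_A^2.
   Cauchy-Schwarz for the semi-inner product <.,.>_A bounds c = |<Sz, z>_A|^2 by both a and b, so
   (c + a^2)^2 <= (a + a^2)(b + a^2).  Convexity of t^n splits the n-th powers of the two factors
   into 2^(n-1)(a^n + a^2n) and 2^(n-1)(b^n + a^2n), and the Hoelder-McCarthy inequality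
   <T z, z>_A^k <= <T^k z, z>_A for the A-positive operators T = S#S and SS# bounds these sums by
   the A-norms of S#S^n + S#S^2n and SS#^n + S#S^2n.

   The adjoint and the Moore-Penrose inverse are made meaningful by the projection theorem and
   Riesz representation; S# may then be replaced by any R with A R = S* A, because A S# = A R and
   every quantity involved only sees vectors through A.  The A-operator seminorms are real
   suprema, so their finiteness is needed: it follows from a spectral-radius argument for
   A-selfadjoint operators. *)

theory Submission
  imports Defs
begin

section \<open>Complex inner product spaces\<close>

lemma scaleC_zero_left [simp]: "(0::complex) *\<^sub>C x = 0"
  by (metis of_real_0 scaleR_scaleC scaleR_zero_left)

lemma scaleC_zero_right [simp]: "c *\<^sub>C (0::'a::complex_vector) = 0"
  by (metis add_cancel_right_right add_0 scaleC_add_right)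

lemma scaleC_minus1: "(-1::complex) *\<^sub>C x = - x"
  by (metis of_real_1 of_real_minus scaleR_minus1_left scaleR_scaleC)

lemma cinner_zero_left [simp]: "cinner 0 y = 0"
  by (metis cinner_scaleC_left mult_zero_left scaleC_zero_left)

lemma cinner_zero_right [simp]: "cinner x 0 = 0"
  by (metis cinner_commute cinner_zero_left complex_cnj_zero)

lemma cinner_minus_left [simp]: "cinner (- x) y = - cinner x y"
  by (metis cinner_scaleC_left mult_minus1 scaleC_minus1)

lemma cinner_diff_left: "cinner (x - y) z = cinner x z - cinner y z"
  by (metis cinner_add_left cinner_minus_left diff_conv_add_uminus)

lemma cinner_add_right: "cinner x (y + z) = cinner x y + cinner x z"
  by (metis cinner_add_left cinner_commute complex_cnj_add)

lemma cinner_diff_right: "cinner x (y - z) = cinner x y - cinner x z"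
  by (metis cinner_commute cinner_diff_left complex_cnj_diff)

lemma cinner_scaleC_right: "cinner x (c *\<^sub>C y) = cnj c * cinner x y"
  by (metis cinner_commute cinner_scaleC_left complex_cnj_mult)

lemma Im_eq_0_if_eq_cnj: "z = cnj z \<Longrightarrow> Im z = 0"
  by (metis Reals_cnj_iff complex_is_Real_iff)

lemma norm_sq_cinner: "(norm x)\<^sup>2 = Re (cinner x x)"
  by (metis norm_eq_sqrt_cinner norm_ge_zero real_sqrt_ge_0_iff real_sqrt_pow2)

lemma cinner_self_eq: "cinner x x = complex_of_real ((norm x)\<^sup>2)"
  by (simp add: norm_sq_cinner complex_eq_iff Im_eq_0_if_eq_cnj[OF cinner_commute])

lemma cinner_self_eq_zero [simp]: "cinner x x = 0 \<longleftrightarrow> x = 0"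
  by (simp add: cinner_self_eq)

lemma cinner_ext_left: "(\<And>y. cinner a y = cinner b y) \<Longrightarrow> a = b"
  by (metis cinner_diff_left cinner_self_eq_zero eq_iff_diff_eq_0)

definition clinear :: "('a::complex_vector \<Rightarrow> 'a) \<Rightarrow> bool" where
  "clinear P \<longleftrightarrow> (\<forall>x y. P (x + y) = P x + P y) \<and> (\<forall>c x. P (c *\<^sub>C x) = c *\<^sub>C P x)"

definition hermitian :: "('a::complex_inner \<Rightarrow> 'a) \<Rightarrow> bool" where
  "hermitian P \<longleftrightarrow> (\<forall>x y. cinner (P x) y = cinner x (P y))"

definition nonneg_op :: "('a::complex_inner \<Rightarrow> 'a) \<Rightarrow> bool" where
  "nonneg_op P \<longleftrightarrow> (\<forall>x. 0 \<le> Re (cinner (P x) x))"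

lemma clinear_add: "clinear P \<Longrightarrow> P (x + y) = P x + P y"
  by (simp add: clinear_def)

lemma clinear_scaleC: "clinear P \<Longrightarrow> P (c *\<^sub>C x) = c *\<^sub>C P x"
  by (simp add: clinear_def)

lemma clinear_diff: "clinear P \<Longrightarrow> P (x - y) = P x - P y"
  by (metis clinear_add clinear_scaleC scaleC_minus1 diff_conv_add_uminus)

lemma clinear_comp: "clinear P \<Longrightarrow> clinear Q \<Longrightarrow> clinear (P \<circ> Q)"
  by (simp add: clinear_def)

lemma bounded_clinear_clinear: "bounded_clinear T \<Longrightarrow> clinear T"
  unfolding bounded_clinear_def clinear_def using linear_simps(1) by blast

lemma hermitian_Im_cinner: "hermitian P \<Longrightarrow> Im (cinner (P y) y) = 0"
  by (metis Im_eq_0_if_eq_cnj cinner_commute hermitian_def)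

lemma quadratic_nonneg_imp_le:
  fixes a b g :: real
  assumes "0 \<le> a" "0 \<le> b" "0 \<le> g" "\<And>s. 0 \<le> a - 2 * s * g + s\<^sup>2 * g * b"
  shows "g \<le> a * b"
proof (cases "b > 0")
  case True
  have "0 \<le> a - 2 * (1/b) * g + (1/b)\<^sup>2 * g * b" using assms(4) .
  also have "\<dots> = a - g / b" using True by (simp add: power2_eq_square field_simps)
  finally show ?thesis using True by (simp add: field_simps mult.commute)
next
  case False
  then have "b = 0" using assms(2) by simp
  show ?thesis
  proof (rule ccontr)
    assume "\<not> g \<le> a * b"
    then have "g > 0" using \<open>b = 0\<close> by simp
    have "0 \<le> a - 2 * ((a+1)/(2*g)) * g" using assms(4)[of "(a+1)/(2*g)"] \<open>b = 0\<close> by simp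
    also have "\<dots> = -1" using \<open>g > 0\<close> by (simp add: field_simps)
    finally show False by simp
  qed
qed

lemma Re_form_diff_scaleC:
  fixes P :: "'a::complex_inner \<Rightarrow> 'a" and x y :: 'a and s :: real
  assumes "clinear P" "hermitian P"
  defines "g \<equiv> cinner (P x) y"
  shows "Re (cinner (P (x - (of_real s * g) *\<^sub>C y)) (x - (of_real s * g) *\<^sub>C y))
     = Re (cinner (P x) x) - 2 * s * (cmod g)\<^sup>2 + s\<^sup>2 * (cmod g)\<^sup>2 * Re (cinner (P y) y)"
proof -
  obtain b where b: "cinner (P y) y = of_real b"
    using hermitian_Im_cinner[OF assms(2)] by (metis complex_is_Real_iff Reals_cases)
  have yx: "cinner (P y) x = cnj g"
    using assms(2) unfolding g_def hermitian_def by (metis cinner_commute)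
  have "cinner (P (x - (of_real s * g) *\<^sub>C y)) (x - (of_real s * g) *\<^sub>C y)
      = cinner (P x) x - 2 * of_real s * (g * cnj g) + (of_real s)\<^sup>2 * (g * cnj g) * of_real b"
    using assms(1) by (simp add: clinear_diff clinear_scaleC cinner_diff_left cinner_diff_right
        cinner_scaleC_left cinner_scaleC_right yx b g_def[symmetric] power2_eq_square algebra_simps)
  also have "\<dots> = cinner (P x) x + of_real (- 2 * s * (cmod g)\<^sup>2 + s\<^sup>2 * (cmod g)\<^sup>2 * b)"
    by (simp add: complex_norm_square[symmetric])
  finally show ?thesis by (simp add: b)
qed

lemma cauchy_schwarz_form:
  assumes "clinear P" "hermitian P" "nonneg_op P"
  shows "(cmod (cinner (P x) y))\<^sup>2 \<le> Re (cinner (P x) x) * Re (cinner (P y) y)"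
proof (rule quadratic_nonneg_imp_le)
  show "0 \<le> Re (cinner (P x) x)" "0 \<le> Re (cinner (P y) y)"
    using assms(3) nonneg_op_def by auto
  show "0 \<le> Re (cinner (P x) x) - 2 * s * (cmod (cinner (P x) y))\<^sup>2
                + s\<^sup>2 * (cmod (cinner (P x) y))\<^sup>2 * Re (cinner (P y) y)" for s
    using Re_form_diff_scaleC[OF assms(1,2), of x s y] assms(3) unfolding nonneg_op_def by metis
qed simp

lemma cauchy_schwarz_form_sqrt:
  assumes "clinear P" "hermitian P" "nonneg_op P"
  shows "cmod (cinner (P x) y) \<le> sqrt (Re (cinner (P x) x)) * sqrt (Re (cinner (P y) y))"
  by (metis cauchy_schwarz_form[OF assms] real_sqrt_abs real_sqrt_le_mono real_sqrt_mult abs_norm_cancel)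

lemma cinner_cauchy_schwarz: "cmod (cinner x y) \<le> norm x * norm y"
proof -
  have "clinear (\<lambda>x. x)" "hermitian (\<lambda>x. x)" "nonneg_op (\<lambda>x::'a. x)"
    by (simp_all add: clinear_def hermitian_def nonneg_op_def norm_sq_cinner[symmetric])
  from cauchy_schwarz_form_sqrt[OF this] show ?thesis by (simp add: norm_eq_sqrt_cinner)
qed

section \<open>Orthogonal projection, Riesz representation and the adjoint\<close>

lemma Cauchy_if_dist_sq_le:
  fixes x :: "nat \<Rightarrow> 'a::metric_space"
  assumes e: "e \<longlonglongrightarrow> 0" and le: "\<And>j k. (dist (x j) (x k))\<^sup>2 \<le> e j + e k"
  shows "Cauchy x"
proof (rule metric_CauchyI)
  fix \<epsilon> :: real assume "0 < \<epsilon>"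
  then have "eventually (\<lambda>k. e k < \<epsilon>\<^sup>2 / 2) sequentially"
    by (intro order_tendstoD(2)[OF e]) simp
  then obtain N where N: "\<And>k. N \<le> k \<Longrightarrow> e k < \<epsilon>\<^sup>2 / 2"
    unfolding eventually_sequentially by blast
  have "dist (x j) (x k) < \<epsilon>" if "N \<le> j" "N \<le> k" for j k
  proof -
    have "(dist (x j) (x k))\<^sup>2 < \<epsilon>\<^sup>2"
      using le[of j k] N[OF that(1)] N[OF that(2)] by linarith
    from power2_less_imp_less[OF this] \<open>0 < \<epsilon>\<close> show ?thesis by simp
  qed
  then show "\<exists>N. \<forall>j\<ge>N. \<forall>k\<ge>N. dist (x j) (x k) < \<epsilon>" by blast
qed

lemma parallelogram_law:
  fixes u v :: "'a::complex_inner"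
  shows "(norm (u + v))\<^sup>2 + (norm (u - v))\<^sup>2 = 2 * (norm u)\<^sup>2 + 2 * (norm v)\<^sup>2"
  unfolding norm_sq_cinner
  by (simp add: cinner_add_left cinner_add_right cinner_diff_left cinner_diff_right)

lemma dist_sq_le_by_midpoint:
  fixes a b y :: "'a::complex_inner"
  assumes "0 \<le> d" "d \<le> norm (y - (1/2::real) *\<^sub>R (a + b))"
  shows "(dist a b)\<^sup>2 \<le> 2 * (norm (y - a))\<^sup>2 + 2 * (norm (y - b))\<^sup>2 - 4 * d\<^sup>2"
proof -
  have "(y - a) + (y - b) = 2 *\<^sub>R (y - (1/2::real) *\<^sub>R (a + b))"
    by (simp add: algebra_simps scaleR_2)
  then have "2 * d \<le> norm ((y - a) + (y - b))" using assms(2) by simp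
  then have "(2 * d)\<^sup>2 \<le> (norm ((y - a) + (y - b)))\<^sup>2"
    using assms(1) by (intro power_mono) simp_all
  moreover have "(dist a b)\<^sup>2 = (norm ((y - a) - (y - b)))\<^sup>2"
    by (simp add: dist_norm norm_minus_commute)
  ultimately show ?thesis
    using parallelogram_law[of "y - a" "y - b"] by (simp add: power_mult_distrib)
qed

lemma nearest_point_exists:
  fixes M :: "'a::{complex_inner,complete_space} set"
  assumes "closed M" "M \<noteq> {}"
    and midpoint: "\<And>a b. a \<in> M \<Longrightarrow> b \<in> M \<Longrightarrow> (1/2::real) *\<^sub>R (a + b) \<in> M"
  shows "\<exists>L\<in>M. \<forall>m\<in>M. norm (y - L) \<le> norm (y - m)"
proof -
  define D where "D = (\<lambda>m. norm (y - m)) ` M"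
  define d where "d = Inf D"
  have "D \<noteq> {}" "bdd_below D"
    unfolding D_def using \<open>M \<noteq> {}\<close> by (auto intro: bdd_belowI[of _ 0])
  have d_le: "d \<le> norm (y - m)" if "m \<in> M" for m
    unfolding d_def D_def using \<open>bdd_below D\<close> that by (intro cInf_lower) (simp_all add: D_def)
  have "0 \<le> d" unfolding d_def using \<open>D \<noteq> {}\<close> by (intro cInf_greatest) (auto simp: D_def)
  have "\<exists>m\<in>M. norm (y - m) < d + 1 / Suc k" for k :: nat
  proof -
    have "Inf D < d + 1 / Suc k" unfolding d_def by simp
    then show ?thesis using cInf_less_iff[OF \<open>D \<noteq> {}\<close> \<open>bdd_below D\<close>] unfolding D_def by blast
  qed
  then obtain ms where ms: "\<And>k. ms k \<in> M" "\<And>k. norm (y - ms k) < d + 1 / Suc k"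
    by metis
  define e where "e k = 2 * (d + 1 / Suc k)\<^sup>2 - 2 * d\<^sup>2" for k :: nat
  have "(norm (y - ms i))\<^sup>2 \<le> (d + 1 / Suc i)\<^sup>2" for i
    using ms(2)[of i] by (intro power_mono) simp_all
  then have "(dist (ms j) (ms k))\<^sup>2 \<le> e j + e k" for j k
    using dist_sq_le_by_midpoint[OF \<open>0 \<le> d\<close> d_le[OF midpoint[OF ms(1)[of j] ms(1)[of k]]]]
    unfolding e_def by (smt (verit))
  moreover have "e \<longlonglongrightarrow> 2 * (d + 0)\<^sup>2 - 2 * d\<^sup>2"
    unfolding e_def by (intro tendsto_intros LIMSEQ_Suc[OF lim_inverse_n'])
  ultimately have "Cauchy ms"
    by (intro Cauchy_if_dist_sq_le[of e]) simp_all
  then obtain L where L: "ms \<longlonglongrightarrow> L"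
    using Cauchy_convergent_iff convergent_def by blast
  have "norm (y - L) \<le> d"
  proof (rule LIMSEQ_le)
    show "(\<lambda>k. norm (y - ms k)) \<longlonglongrightarrow> norm (y - L)"
      using L by (intro tendsto_intros)
    show "(\<lambda>k. d + 1 / Suc k) \<longlonglongrightarrow> d"
      using tendsto_add[OF tendsto_const LIMSEQ_Suc[OF lim_inverse_n'], of d] by simp
    show "\<exists>N. \<forall>k\<ge>N. norm (y - ms k) \<le> d + 1 / Suc k"
      using ms(2) less_imp_le by blast
  qed
  then show ?thesis
    using closed_sequentially[OF \<open>closed M\<close> ms(1) L] d_le by (meson order_trans)
qed

lemma nearest_point_orthogonal:
  assumes sub: "\<And>a b c. a \<in> M \<Longrightarrow> b \<in> M \<Longrightarrow> a + c *\<^sub>C b \<in> M"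
    and "L \<in> M" and nearest: "\<And>m. m \<in> M \<Longrightarrow> norm (y - L) \<le> norm (y - m)" and "w \<in> M"
  shows "cinner (y - L) w = 0"
proof -
  define g where "g = cinner (y - L) w"
  have "(cmod g)\<^sup>2 \<le> 0 * (norm w)\<^sup>2"
  proof (rule quadratic_nonneg_imp_le)
    fix s :: real
    have "norm (y - L) \<le> norm (y - L - (of_real s * g) *\<^sub>C w)"
      using nearest[OF sub[OF \<open>L \<in> M\<close> \<open>w \<in> M\<close>]] by (simp add: algebra_simps)
    then have "(norm (y - L))\<^sup>2 \<le> (norm (y - L - (of_real s * g) *\<^sub>C w))\<^sup>2"
      by (intro power_mono) auto
    then show "0 \<le> 0 - 2 * s * (cmod g)\<^sup>2 + s\<^sup>2 * (cmod g)\<^sup>2 * (norm w)\<^sup>2"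
      using Re_form_diff_scaleC[of "\<lambda>x. x" "y - L" s w]
      by (simp add: clinear_def hermitian_def norm_sq_cinner g_def)
  qed auto
  then show ?thesis unfolding g_def by simp
qed

lemma orthogonal_projection_exists:
  fixes M :: "'a::{complex_inner,complete_space} set"
  assumes "closed M" "0 \<in> M" and sub: "\<And>a b c. a \<in> M \<Longrightarrow> b \<in> M \<Longrightarrow> a + c *\<^sub>C b \<in> M"
  shows "\<exists>L\<in>M. \<forall>w\<in>M. cinner (y - L) w = 0"
proof -
  have "(1/2::real) *\<^sub>R (a + b) \<in> M" if "a \<in> M" "b \<in> M" for a b
  proof -
    have "0 + of_real (1/2) *\<^sub>C a \<in> M" using sub \<open>0 \<in> M\<close> that(1) .
    then have "(0 + of_real (1/2) *\<^sub>C a) + of_real (1/2) *\<^sub>C b \<in> M" using that(2) by (rule sub)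
    then show ?thesis by (simp add: scaleR_scaleC scaleC_add_right)
  qed
  with assms(1,2) obtain L where "L \<in> M" "\<And>m. m \<in> M \<Longrightarrow> norm (y - L) \<le> norm (y - m)"
    using nearest_point_exists[of M y] by blast
  then show ?thesis using nearest_point_orthogonal[OF sub] by blast
qed

lemma orthogonal_projection_onto_kernel:
  fixes f :: "'a::{complex_inner,complete_space} \<Rightarrow> 'b::real_normed_vector"
  assumes "bounded_linear f" and "\<And>c x. f x = 0 \<Longrightarrow> f (c *\<^sub>C x) = 0"
  shows "\<exists>m. f m = 0 \<and> (\<forall>w. f w = 0 \<longrightarrow> cinner (y - m) w = 0)"
proof -
  have "closed {x. f x = 0}"
    using assms(1) by (intro closed_Collect_eq linear_continuous_on continuous_on_const)
  moreover have "a + c *\<^sub>C b \<in> {x. f x = 0}" if "a \<in> {x. f x = 0}" "b \<in> {x. f x = 0}" for a b c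
    using that assms(2)[of b c] linear_simps(1)[OF assms(1)] by simp
  ultimately show ?thesis
    using orthogonal_projection_exists[of "{x. f x = 0}" y] linear_simps(3)[OF assms(1)] by blast
qed

lemma riesz_representation:
  fixes f :: "'a::{complex_inner,complete_space} \<Rightarrow> complex"
  assumes bl: "bounded_linear f" and hom: "\<And>c x. f (c *\<^sub>C x) = c * f x"
  shows "\<exists>v. \<forall>x. f x = cinner x v"
proof (cases "\<forall>x. f x = 0")
  case True
  then show ?thesis by (intro exI[of _ 0]) simp
next
  case False
  then obtain x0 where "f x0 \<noteq> 0" by blast
  from orthogonal_projection_onto_kernel[OF bl, of x0]
  obtain m where "f m = 0" and orth: "\<And>w. f w = 0 \<Longrightarrow> cinner (x0 - m) w = 0"
    using hom by auto
  define w0 where "w0 = x0 - m"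
  have "f w0 = f x0" unfolding w0_def using linear_simps(2)[OF bl] \<open>f m = 0\<close> by simp
  then have "cinner w0 w0 \<noteq> 0" using \<open>f x0 \<noteq> 0\<close> linear_simps(3)[OF bl] by auto
  show ?thesis
  proof (intro exI allI)
    fix x
    have "f (f x *\<^sub>C w0 - f w0 *\<^sub>C x) = 0"
      using linear_simps(2)[OF bl] hom by (simp add: mult.commute)
    then have "cnj (cinner w0 (f x *\<^sub>C w0 - f w0 *\<^sub>C x)) = 0"
      using orth unfolding w0_def by simp
    then have "f x * cinner w0 w0 - f w0 * cinner x w0 = 0"
      by (simp add: cinner_commute[symmetric] cinner_diff_left cinner_scaleC_left)
    then have "f x = f w0 * cinner x w0 / cinner w0 w0"
      using \<open>cinner w0 w0 \<noteq> 0\<close> by (simp add: field_simps)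
    then show "f x = cinner x (cnj (f w0 / cinner w0 w0) *\<^sub>C w0)"
      by (simp add: cinner_scaleC_right)
  qed
qed

lemma adjoint_exists:
  fixes S :: "'a::{complex_inner,complete_space} \<Rightarrow> 'a"
  assumes "bounded_clinear S"
  shows "\<exists>T. \<forall>x y. cinner (S x) y = cinner x (T y)"
proof -
  have bl: "bounded_linear S" and hom: "\<And>c x. S (c *\<^sub>C x) = c *\<^sub>C S x"
    using assms unfolding bounded_clinear_def by auto
  obtain K where K: "\<And>x. norm (S x) \<le> norm x * K"
    using bounded_linear.pos_bounded[OF bl] by blast
  have "\<exists>v. \<forall>x. cinner (S x) y = cinner x v" for y
  proof (rule riesz_representation)
    show "bounded_linear (\<lambda>x. cinner (S x) y)"
    proof (rule bounded_linear_intro[where K = "K * norm y"])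
      show "cinner (S (a + b)) y = cinner (S a) y + cinner (S b) y" for a b
        using linear_simps(1)[OF bl] by (simp add: cinner_add_left)
      show "cinner (S (r *\<^sub>R a)) y = r *\<^sub>R cinner (S a) y" for r a
        using linear_simps(5)[OF bl] by (simp add: scaleR_scaleC cinner_scaleC_left scaleR_conv_of_real)
      show "norm (cinner (S a) y) \<le> norm a * (K * norm y)" for a
      proof -
        have "norm (cinner (S a) y) \<le> norm (S a) * norm y" by (rule cinner_cauchy_schwarz)
        also have "\<dots> \<le> norm a * K * norm y" using K[of a] by (simp add: mult_right_mono)
        finally show ?thesis by (simp add: mult.assoc)
      qed
    qed
    show "cinner (S (c *\<^sub>C x)) y = c * cinner (S x) y" for c x
      using hom by (simp add: cinner_scaleC_left)
  qed
  then show ?thesis by metis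
qed

lemma cinner_adj:
  fixes S :: "'a::{complex_inner,complete_space} \<Rightarrow> 'a"
  assumes "bounded_clinear S"
  shows "cinner (S x) y = cinner x (adj S y)"
proof -
  obtain T where T: "\<forall>x y. cinner (S x) y = cinner x (T y)"
    using adjoint_exists[OF assms] by blast
  have "T' = T" if "\<forall>x y. cinner (S x) y = cinner x (T' y)" for T'
  proof
    fix y
    have "cinner z (T' y - T y) = 0" for z
      using T that by (simp add: cinner_diff_right)
    from this[of "T' y - T y"] show "T' y = T y" by simp
  qed
  then have "\<exists>!T. \<forall>x y. cinner (S x) y = cinner x (T y)" using T by blast
  from theI'[OF this] show ?thesis unfolding adj_def by blast
qed

lemma mp_inv_range:
  fixes A :: "'a::{complex_inner,complete_space} \<Rightarrow> 'a"
  assumes "bounded_clinear A"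
  shows "A (mp_inv A (A x)) = A x"
proof -
  have cA: "clinear A" using bounded_clinear_clinear[OF assms] .
  have "bounded_linear A" using assms unfolding bounded_clinear_def by blast
  define P where "P z \<longleftrightarrow> (\<forall>w. A w = 0 \<longrightarrow> cinner z w = 0) \<and> (\<forall>w. cinner (A z - A x) (A w) = 0)"
    for z
  have "A (c *\<^sub>C w) = 0" if "A w = 0" for c w
    using clinear_scaleC[OF cA] that by simp
  from orthogonal_projection_onto_kernel[OF \<open>bounded_linear A\<close> this, of x]
  obtain m where "A m = 0" and orth: "\<And>w. A w = 0 \<Longrightarrow> cinner (x - m) w = 0"
    by blast
  have "P (x - m)"
    unfolding P_def using orth \<open>A m = 0\<close> by (simp add: clinear_diff[OF cA])
  moreover have "z1 = z2" if "P z1" "P z2" for z1 z2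
  proof -
    have "cinner (A z1 - A x) (A (z1 - z2)) = 0" "cinner (A z2 - A x) (A (z1 - z2)) = 0"
      using that unfolding P_def by blast+
    then have "cinner ((A z1 - A x) - (A z2 - A x)) (A (z1 - z2)) = 0"
      unfolding cinner_diff_left[of "A z1 - A x"] by simp
    then have "A (z1 - z2) = 0" by (simp add: clinear_diff[OF cA])
    then have "cinner z1 (z1 - z2) = 0" "cinner z2 (z1 - z2) = 0"
      using that unfolding P_def by blast+
    then have "cinner (z1 - z2) (z1 - z2) = 0"
      unfolding cinner_diff_left[of z1] by simp
    then show ?thesis by simp
  qed
  ultimately have "P (THE z. P z)" by (blast intro: theI)
  then have "cinner (A (mp_inv A (A x)) - A x) (A (mp_inv A (A x) - x)) = 0"
    unfolding mp_inv_def P_def by blast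
  then show ?thesis by (simp add: clinear_diff[OF cA])
qed

section \<open>Positive operators and the \<open>A\<close>-seminorm\<close>

lemma hermitian_if_Im_cinner_zero:
  assumes c: "clinear P" and r: "\<And>x. Im (cinner (P x) x) = 0"
  shows "hermitian P"
  unfolding hermitian_def
proof (intro allI)
  fix x y
  define u where "u = cinner (P x) y"
  define v where "v = cinner (P y) x"
  have "cinner (P (x + y)) (x + y) = cinner (P x) x + u + v + cinner (P y) y"
    using c unfolding u_def v_def by (simp add: clinear_add cinner_add_left cinner_add_right)
  then have "Im (u + v) = 0" using r[of "x + y"] r[of x] r[of y] by simp
  have "cinner (P (x + \<i> *\<^sub>C y)) (x + \<i> *\<^sub>C y) = cinner (P x) x - \<i> * u + \<i> * v + cinner (P y) y"
    using c unfolding u_def v_def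
    by (simp add: clinear_add clinear_scaleC cinner_add_left cinner_add_right cinner_scaleC_left
        cinner_scaleC_right algebra_simps)
  then have "Re (v - u) = 0" using r[of "x + \<i> *\<^sub>C y"] r[of x] r[of y] by simp
  with \<open>Im (u + v) = 0\<close> have "u = cnj v" by (simp add: complex_eq_iff)
  then show "cinner (P x) y = cinner x (P y)"
    unfolding u_def v_def using cinner_commute[of x "P y"] by simp
qed

lemma positive_op_clinear: "positive_op A \<Longrightarrow> clinear A"
  unfolding positive_op_def using bounded_clinear_clinear by blast

lemma positive_op_hermitian: "positive_op A \<Longrightarrow> hermitian A"
  using hermitian_if_Im_cinner_zero positive_op_clinear positive_op_def by blast

lemma positive_op_nonneg: "positive_op A \<Longrightarrow> nonneg_op A"
  unfolding positive_op_def nonneg_op_def by blast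

lemma positive_op_bounded_linear: "positive_op A \<Longrightarrow> bounded_linear A"
  unfolding positive_op_def bounded_clinear_def by blast

lemma cauchy_schwarz_A:
  "positive_op A \<Longrightarrow> (cmod (cinner (A x) y))\<^sup>2 \<le> Re (cinner (A x) x) * Re (cinner (A y) y)"
  by (intro cauchy_schwarz_form positive_op_clinear positive_op_hermitian positive_op_nonneg)

lemma normA_sq: "positive_op A \<Longrightarrow> (normA A z)\<^sup>2 = Re (cinner (A z) z)"
  using positive_op_nonneg[of A] unfolding nonneg_op_def normA_def innerA_def by simp

lemma normA_nonneg: "positive_op A \<Longrightarrow> 0 \<le> normA A z"
  using positive_op_nonneg[of A] unfolding nonneg_op_def normA_def innerA_def by simp

lemma Re_cinner_eq_1_if_normA_eq_1: "positive_op A \<Longrightarrow> normA A z = 1 \<Longrightarrow> Re (cinner (A z) z) = 1"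
  using normA_sq[of A z] by simp

lemma cmod_cinner_le_normA:
  "positive_op A \<Longrightarrow> cmod (cinner (A x) y) \<le> normA A x * normA A y"
  unfolding normA_def innerA_def
  by (intro cauchy_schwarz_form_sqrt positive_op_clinear positive_op_hermitian positive_op_nonneg)

lemma normA_cong:
  assumes "positive_op A" "A u = A v"
  shows "normA A u = normA A v"
proof -
  have herm: "cinner (A x) y = cinner x (A y)" for x y
    using positive_op_hermitian[OF assms(1)] unfolding hermitian_def by blast
  have "cinner (A u) u = cinner (A v) v"
    using herm[of u u] herm[of v u] herm[of v v] herm[of u v] assms(2) by simp
  then show ?thesis unfolding normA_def innerA_def by simp
qed

lemma normA_le_norm:
  assumes "positive_op A"
  obtains c where "0 \<le> c" "\<And>v. normA A v \<le> c * norm v"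
proof -
  obtain K where "0 < K" and K: "\<And>x. norm (A x) \<le> norm x * K"
    using bounded_linear.pos_bounded[OF positive_op_bounded_linear[OF assms]] by blast
  have "normA A v \<le> sqrt K * norm v" for v
  proof -
    have "Re (cinner (A v) v) \<le> cmod (cinner (A v) v)" by (rule complex_Re_le_cmod)
    also have "\<dots> \<le> norm (A v) * norm v" by (rule cinner_cauchy_schwarz)
    also have "\<dots> \<le> norm v * K * norm v" using K[of v] by (simp add: mult_right_mono)
    finally have "Re (cinner (A v) v) \<le> K * (norm v)\<^sup>2"
      by (simp add: power2_eq_square mult_ac)
    then have "normA A v \<le> sqrt (K * (norm v)\<^sup>2)"
      unfolding normA_def innerA_def using real_sqrt_le_mono by blast
    then show ?thesis by (simp add: real_sqrt_mult)
  qed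
  moreover have "0 \<le> sqrt K" using \<open>0 < K\<close> by simp
  ultimately show ?thesis by (rule that[rotated])
qed

section \<open>\<open>A\<close>-selfadjoint operators\<close>

definition A_selfadjoint :: "('a::complex_inner \<Rightarrow> 'a) \<Rightarrow> ('a \<Rightarrow> 'a) \<Rightarrow> bool" where
  "A_selfadjoint A W \<longleftrightarrow> (\<forall>x y. cinner (A (W x)) y = cinner (A x) (W y))"

lemma A_selfadjoint_funpow:
  assumes "A_selfadjoint A W"
  shows "A_selfadjoint A (W ^^ k)"
proof (induction k)
  case 0
  then show ?case by (simp add: A_selfadjoint_def)
next
  case (Suc k)
  then show ?case
    using assms unfolding A_selfadjoint_def by (simp add: funpow_swap1)
qed

lemma A_selfadjoint_funpow_shift:
  assumes "A_selfadjoint A W"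
  shows "cinner (A ((W ^^ i) x)) ((W ^^ j) y) = cinner (A ((W ^^ (i + j)) x)) y"
  using A_selfadjoint_funpow[OF assms, of j] unfolding A_selfadjoint_def
  by (metis add.commute comp_apply funpow_add)

lemma A_selfadjoint_add:
  "clinear A \<Longrightarrow> A_selfadjoint A V \<Longrightarrow> A_selfadjoint A W \<Longrightarrow> A_selfadjoint A (\<lambda>x. V x + W x)"
  unfolding A_selfadjoint_def by (simp add: clinear_add cinner_add_left cinner_add_right)

lemma hermitian_comp_A_selfadjoint:
  "positive_op A \<Longrightarrow> A_selfadjoint A W \<Longrightarrow> hermitian (A \<circ> W)"
  using positive_op_hermitian unfolding A_selfadjoint_def hermitian_def by fastforce

definition A_bounded :: "('a::complex_inner \<Rightarrow> 'a) \<Rightarrow> ('a \<Rightarrow> 'a) \<Rightarrow> bool" where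
  "A_bounded A W \<longleftrightarrow> (\<exists>K. \<forall>z. normA A z = 1 \<longrightarrow> normA A (W z) \<le> K)"

lemma bdd_above_normA_image:
  "A_bounded A W \<Longrightarrow> bdd_above (insert 0 ((\<lambda>z. normA A (W z)) ` {z. normA A z = 1}))"
  unfolding A_bounded_def by (auto intro: bdd_aboveI2)

lemma normA_le_opnormA: "A_bounded A W \<Longrightarrow> normA A z = 1 \<Longrightarrow> normA A (W z) \<le> opnormA A W"
  unfolding opnormA_def by (rule cSup_upper[OF _ bdd_above_normA_image]) auto

lemma opnormA_nonneg: "A_bounded A W \<Longrightarrow> 0 \<le> opnormA A W"
  unfolding opnormA_def by (rule cSup_upper[OF _ bdd_above_normA_image]) auto

lemma opnormA_cong:
  "positive_op A \<Longrightarrow> (\<And>z. A (V z) = A (W z)) \<Longrightarrow> opnormA A V = opnormA A W"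
  unfolding opnormA_def using normA_cong by metis

lemma Re_cinner_le_opnormA:
  assumes "positive_op A" "A_bounded A W" "normA A z = 1"
  shows "Re (cinner (A (W z)) z) \<le> opnormA A W"
proof -
  have "Re (cinner (A (W z)) z) \<le> cmod (cinner (A (W z)) z)" by (rule complex_Re_le_cmod)
  also have "\<dots> \<le> normA A (W z)"
    using cmod_cinner_le_normA[OF assms(1), of "W z" z] assms(3) by simp
  also have "\<dots> \<le> opnormA A W" using normA_le_opnormA[OF assms(2,3)] .
  finally show ?thesis .
qed

lemma le_one_if_two_pow_bounded:
  fixes q :: real
  assumes "\<And>k. q ^ (2 ^ k) \<le> C"
  shows "q \<le> 1"
proof (rule ccontr)
  assume "\<not> q \<le> 1"
  then obtain k where "C < q ^ k" using real_arch_pow by fastforce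
  also have "\<dots> \<le> q ^ (2 ^ k)"
    using \<open>\<not> q \<le> 1\<close> by (intro power_increasing) (simp_all add: less_imp_le)
  finally show False using assms[of k] by simp
qed

lemma norm_funpow_le:
  fixes W :: "'a::real_normed_vector \<Rightarrow> 'a"
  assumes "\<And>x. norm (W x) \<le> norm x * K" "0 \<le> K"
  shows "norm ((W ^^ m) x) \<le> K ^ m * norm x"
proof (induction m)
  case (Suc m)
  have "norm ((W ^^ Suc m) x) \<le> norm ((W ^^ m) x) * K" using assms(1) by simp
  also have "\<dots> \<le> K ^ m * norm x * K" using Suc assms(2) by (simp add: mult_right_mono)
  finally show ?case by (simp add: algebra_simps)
qed simp

lemma bounded_linear_funpow:
  fixes W :: "'a::real_normed_vector \<Rightarrow> 'a"
  shows "bounded_linear W \<Longrightarrow> bounded_linear (W ^^ k)"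
proof (induction k)
  case 0
  then show ?case by (simp add: id_def bounded_linear_ident)
next
  case (Suc k)
  then show ?case using bounded_linear_compose[of W "W ^^ k"] by (simp add: o_def)
qed

lemma normA_funpow_sq_le:
  assumes "positive_op A" "A_selfadjoint A W" "normA A z = 1"
  shows "(normA A ((W ^^ m) z))\<^sup>2 \<le> normA A ((W ^^ (2 * m)) z)"
proof -
  have "(normA A ((W ^^ m) z))\<^sup>2 = Re (cinner (A ((W ^^ (2 * m)) z)) z)"
    using normA_sq[OF assms(1)] A_selfadjoint_funpow_shift[OF assms(2), of m z m z]
    by (simp add: mult_2)
  also have "\<dots> \<le> cmod (cinner (A ((W ^^ (2 * m)) z)) z)" by (rule complex_Re_le_cmod)
  also have "\<dots> \<le> normA A ((W ^^ (2 * m)) z)"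
    using cmod_cinner_le_normA[OF assms(1)] assms(3) by (metis mult.right_neutral)
  finally show ?thesis .
qed

lemma normA_pow_two_pow_le:
  assumes "positive_op A" "A_selfadjoint A W" "normA A z = 1"
  shows "normA A (W z) ^ (2 ^ k) \<le> normA A ((W ^^ (2 ^ k)) z)"
proof (induction k)
  case (Suc k)
  have "normA A (W z) ^ (2 ^ Suc k) = (normA A (W z) ^ (2 ^ k))\<^sup>2"
    by (simp add: power_mult[symmetric] mult.commute)
  also have "\<dots> \<le> (normA A ((W ^^ (2 ^ k)) z))\<^sup>2"
    using Suc normA_nonneg[OF assms(1)] by (intro power_mono) simp_all
  also have "\<dots> \<le> normA A ((W ^^ (2 ^ Suc k)) z)"
    using normA_funpow_sq_le[OF assms] by simp
  finally show ?case .
qed simp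

text \<open>For a unit vector \<open>z\<close>, the \<open>A\<close>-norm of \<open>W\<^sup>2\<^sup>k z\<close> is at least \<open>\<parallel>W z\<parallel>\<^sub>A\<^sup>2\<^sup>k\<close> and at most
  \<open>c \<parallel>W\<parallel>\<^sup>2\<^sup>k \<parallel>z\<parallel>\<close>; letting \<open>k\<close> grow gives \<open>\<parallel>W z\<parallel>\<^sub>A \<le> \<parallel>W\<parallel>\<close>.\<close>
lemma A_bounded_if_A_selfadjoint:
  assumes "positive_op A" "bounded_linear W" "A_selfadjoint A W"
  shows "A_bounded A W"
proof -
  obtain K where "0 < K" and K: "\<And>x. norm (W x) \<le> norm x * K"
    using bounded_linear.pos_bounded[OF assms(2)] by blast
  obtain c where "0 \<le> c" and c: "\<And>v. normA A v \<le> c * norm v"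
    using normA_le_norm[OF assms(1)] by blast
  have "normA A (W z) \<le> K" if "normA A z = 1" for z
  proof -
    have "(normA A (W z) / K) ^ (2 ^ k) \<le> c * norm z" for k
    proof -
      have "normA A (W z) ^ (2 ^ k) \<le> c * norm ((W ^^ (2 ^ k)) z)"
        using normA_pow_two_pow_le[OF assms(1,3) that] c order_trans by blast
      also have "\<dots> \<le> c * (K ^ (2 ^ k) * norm z)"
        using norm_funpow_le[OF K] \<open>0 < K\<close> \<open>0 \<le> c\<close> by (intro mult_left_mono) simp_all
      finally show ?thesis
        using \<open>0 < K\<close> by (simp add: power_divide divide_le_eq mult_ac)
    qed
    then have "normA A (W z) / K \<le> 1" by (rule le_one_if_two_pow_bounded)
    then show ?thesis using \<open>0 < K\<close> by (simp add: divide_le_eq)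
  qed
  then show ?thesis unfolding A_bounded_def by blast
qed

section \<open>The Hoelder--McCarthy inequality\<close>

lemma pow_le_if_log_convex:
  fixes f :: "nat \<Rightarrow> real"
  assumes nonneg: "\<And>k. 0 \<le> f k" and "f 0 = 1"
    and log_convex: "\<And>k. (f (Suc k))\<^sup>2 \<le> f k * f (Suc (Suc k))"
  shows "f 1 ^ k \<le> f k"
proof -
  have step: "f 1 * f k \<le> f (Suc k)" for k
  proof (induction k)
    case 0
    then show ?case using \<open>f 0 = 1\<close> by simp
  next
    case (Suc k)
    show ?case
    proof (cases "f (Suc k) = 0")
      case True
      then show ?thesis using nonneg by simp
    next
      case False
      then have "0 < f (Suc k)" using nonneg[of "Suc k"] by simp
      have "f (Suc k) * (f 1 * f (Suc k)) = f 1 * (f (Suc k))\<^sup>2"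
        by (simp add: power2_eq_square)
      also have "\<dots> \<le> (f 1 * f k) * f (Suc (Suc k))"
        using mult_left_mono[OF log_convex[of k] nonneg[of 1]] by simp
      also have "\<dots> \<le> f (Suc k) * f (Suc (Suc k))"
        using Suc.IH nonneg by (rule mult_right_mono)
      finally show ?thesis using \<open>0 < f (Suc k)\<close> by simp
    qed
  qed
  show ?thesis
  proof (induction k)
    case (Suc k)
    then show ?case using mult_left_mono[OF Suc nonneg[of 1]] step[of k] by simp
  qed (simp add: \<open>f 0 = 1\<close>)
qed

lemma Re_cinner_funpow_log_convex:
  fixes A W :: "'a::complex_inner \<Rightarrow> 'a" and z :: 'a
  assumes A: "positive_op A" and W: "clinear W" "A_selfadjoint A W" "nonneg_op (A \<circ> W)"
  defines "f \<equiv> \<lambda>k. Re (cinner (A ((W ^^ k) z)) z)"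
  shows "0 \<le> f k" and "(f (Suc k))\<^sup>2 \<le> f k * f (Suc (Suc k))"
proof -
  have even: "f (2 * m) = Re (cinner (A ((W ^^ m) z)) ((W ^^ m) z))" for m
    unfolding f_def using A_selfadjoint_funpow_shift[OF W(2), of m z m z] by (simp add: mult_2)
  have odd: "f (2 * m + 1) = Re (cinner (A (W ((W ^^ m) z))) ((W ^^ m) z))" for m
    unfolding f_def using A_selfadjoint_funpow_shift[OF W(2), of "Suc m" z m z] by (simp add: mult_2)
  show "0 \<le> f k"
  proof (cases "even k")
    case True
    then obtain m where "k = 2 * m" by (auto elim: evenE)
    then show ?thesis using even[of m] positive_op_nonneg[OF A] unfolding nonneg_op_def by simp
  next
    case False
    then obtain m where "k = 2 * m + 1" by (auto elim: oddE)
    then show ?thesis using odd[of m] W(3) unfolding nonneg_op_def by simp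
  qed
  \<comment> \<open>Cauchy--Schwarz for the form \<open>A\<close> if \<open>k\<close> is even, for the form \<open>A W\<close> if \<open>k\<close> is odd\<close>
  show "(f (Suc k))\<^sup>2 \<le> f k * f (Suc (Suc k))"
  proof (cases "even k")
    case True
    then obtain m where k: "k = 2 * m" by (auto elim: evenE)
    have "(f (Suc k))\<^sup>2 \<le> (cmod (cinner (A ((W ^^ Suc m) z)) ((W ^^ m) z)))\<^sup>2"
      using odd[of m] unfolding k by (simp add: cmod_power2)
    also have "\<dots> \<le> f (2 * Suc m) * f (2 * m)"
      unfolding even by (rule cauchy_schwarz_A[OF A])
    finally show ?thesis using k by (simp add: mult.commute)
  next
    case False
    then obtain m where k: "k = 2 * m + 1" by (auto elim: oddE)
    define u where "u = (W ^^ m) z"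
    have "Suc k = 2 * Suc m" "Suc (Suc k) = 2 * Suc m + 1" using k by simp_all
    then have "(f (Suc k))\<^sup>2 \<le> (cmod (cinner ((A \<circ> W) u) (W u)))\<^sup>2"
      using even[of "Suc m"] unfolding u_def by (simp add: cmod_power2)
    also have "\<dots> \<le> Re (cinner ((A \<circ> W) u) u) * Re (cinner ((A \<circ> W) (W u)) (W u))"
      by (rule cauchy_schwarz_form[OF clinear_comp[OF positive_op_clinear[OF A] W(1)]
            hermitian_comp_A_selfadjoint[OF A W(2)] W(3)])
    also have "\<dots> = f k * f (Suc (Suc k))"
      using odd[of m] odd[of "Suc m"] \<open>Suc (Suc k) = 2 * Suc m + 1\<close> unfolding k u_def by simp
    finally show ?thesis .
  qed
qed

theorem hoelder_mccarthy:
  assumes "positive_op A" "clinear W" "A_selfadjoint A W" "nonneg_op (A \<circ> W)" "normA A z = 1"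
  shows "(Re (cinner (A (W z)) z)) ^ k \<le> Re (cinner (A ((W ^^ k) z)) z)"
  using pow_le_if_log_convex[of "\<lambda>k. Re (cinner (A ((W ^^ k) z)) z)"]
    Re_cinner_funpow_log_convex[OF assms(1-4)] Re_cinner_eq_1_if_normA_eq_1[OF assms(1,5)]
  by simp

section \<open>The bound for the \<open>A\<close>-Davis--Wielandt radius\<close>

lemma power_add_le_two_pow:
  fixes x y :: real
  assumes "0 \<le> x" "0 \<le> y" "1 \<le> n"
  shows "(x + y) ^ n \<le> 2 ^ (n - 1) * (x ^ n + y ^ n)"
proof -
  have "convex_on {0..} (\<lambda>t::real. t ^ n)"
    by (cases "even n") (auto intro: convex_on_subset[OF convex_power_even] convex_power_odd)
  then have "((1 - 1/2) *\<^sub>R x + (1/2) *\<^sub>R y) ^ n \<le> (1 - 1/2) * x ^ n + (1/2) * y ^ n"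
    using assms(1,2) by (intro convex_onD) auto
  then have "((x + y) / 2) ^ n \<le> (x ^ n + y ^ n) / 2"
    by (simp add: add_divide_distrib)
  then have "(x + y) ^ n / 2 ^ n \<le> (x ^ n + y ^ n) / 2"
    by (simp add: power_divide)
  moreover have "(2::real) ^ n = 2 * 2 ^ (n - 1)"
    using assms(3) by (simp add: power_eq_if)
  ultimately show ?thesis by (simp add: field_simps)
qed

lemma sq_add_le_mult_add:
  fixes a b c d :: real
  assumes "0 \<le> c" "c \<le> a" "c \<le> b" "0 \<le> d"
  shows "(c + d)\<^sup>2 \<le> (a + d) * (b + d)"
proof -
  have "c * c \<le> a * b" using assms by (intro mult_mono) auto
  moreover have "c * d \<le> a * d" "c * d \<le> b * d" using assms by (simp_all add: mult_right_mono)
  ultimately show ?thesis by (simp add: power2_eq_square algebra_simps)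
qed

lemma Sup_insert_zero_pow_le:
  fixes X :: "real set"
  assumes "1 \<le> m" "0 \<le> K" and X: "\<And>x. x \<in> X \<Longrightarrow> 0 \<le> x" "\<And>x. x \<in> X \<Longrightarrow> x ^ m \<le> K"
  shows "Sup (insert 0 X) ^ m \<le> K"
proof -
  have root: "0 \<le> root m K" "root m K ^ m = K" using assms(1,2) by simp_all
  have le_root: "x \<le> root m K" if "x \<in> insert 0 X" for x
  proof (cases "x = 0")
    case False
    then have "x ^ m \<le> root m K ^ m" "0 \<le> x" using that X root by auto
    then show ?thesis using assms(1) root(1) by (metis One_nat_def Suc_le_D power_le_imp_le_base)
  qed (simp add: root)
  then have "Sup (insert 0 X) \<le> root m K" by (intro cSup_least) auto
  moreover have "0 \<le> Sup (insert 0 X)"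
    using le_root by (intro cSup_upper bdd_aboveI[of _ "root m K"]) auto
  ultimately show ?thesis using power_mono root(2) by metis
qed

locale A_adjoint_pair =
  fixes A S R :: "'a::complex_inner \<Rightarrow> 'a"
  assumes positive: "positive_op A"
    and bounded_S: "bounded_clinear S" and bounded_R: "bounded_clinear R"
    and adjoint: "\<And>x y. cinner (A (S x)) y = cinner (A x) (R y)"
begin

lemma hermitian_A: "cinner (A x) y = cinner x (A y)"
  using positive_op_hermitian[OF positive] unfolding hermitian_def by blast

lemma adjoint_sym: "cinner (A (R x)) y = cinner (A x) (S y)"
proof -
  have "cinner (A (R x)) y = cnj (cinner (A y) (R x))"
    by (metis hermitian_A cinner_commute)
  also have "\<dots> = cnj (cinner (S y) (A x))"
    by (metis hermitian_A adjoint)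
  also have "\<dots> = cinner (A x) (S y)"
    by (metis cinner_commute)
  finally show ?thesis .
qed

lemma A_cong_S: "A u = A v \<Longrightarrow> A (S u) = A (S v)"
  by (intro cinner_ext_left) (simp add: adjoint)

lemma A_cong_R: "A u = A v \<Longrightarrow> A (R u) = A (R v)"
  by (intro cinner_ext_left) (simp add: adjoint_sym)

lemma A_funpow_cong:
  assumes "\<And>x. A (S' x) = A (R x)"
  shows "A (((S' \<circ> S) ^^ k) z) = A (((R \<circ> S) ^^ k) z)"
    and "A (((S \<circ> S') ^^ k) z) = A (((S \<circ> R) ^^ k) z)"
proof -
  show "A (((S' \<circ> S) ^^ k) z) = A (((R \<circ> S) ^^ k) z)"
  proof (induction k)
    case (Suc k)
    then show ?case using assms A_cong_R[OF A_cong_S[OF Suc.IH]] by simp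
  qed simp
  show "A (((S \<circ> S') ^^ k) z) = A (((S \<circ> R) ^^ k) z)"
  proof (induction k)
    case (Suc k)
    then show ?case using A_cong_S[OF assms] A_cong_S[OF A_cong_R[OF Suc.IH]] by simp
  qed simp
qed

lemma A_selfadjoint_RS: "A_selfadjoint A (R \<circ> S)"
  and A_selfadjoint_SR: "A_selfadjoint A (S \<circ> R)"
  unfolding A_selfadjoint_def by (simp_all add: adjoint adjoint_sym)

lemma nonneg_RS: "nonneg_op (A \<circ> (R \<circ> S))"
  using positive_op_nonneg[OF positive] unfolding nonneg_op_def comp_apply adjoint_sym by blast

lemma nonneg_SR: "nonneg_op (A \<circ> (S \<circ> R))"
  using positive_op_nonneg[OF positive] unfolding nonneg_op_def comp_apply adjoint by blast

lemma clinear_RS: "clinear (R \<circ> S)" and clinear_SR: "clinear (S \<circ> R)"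
  using bounded_S bounded_R by (simp_all add: clinear_comp bounded_clinear_clinear)

lemma bounded_linear_RS: "bounded_linear (R \<circ> S)" and bounded_linear_SR: "bounded_linear (S \<circ> R)"
  using bounded_S bounded_R unfolding bounded_clinear_def o_def
  by (simp_all add: bounded_linear_compose)

lemma A_bounded_funpow_add:
  assumes "V \<in> {R \<circ> S, S \<circ> R}" "W \<in> {R \<circ> S, S \<circ> R}"
  shows "A_bounded A (\<lambda>x. (V ^^ i) x + (W ^^ j) x)"
  using assms
  by (intro A_bounded_if_A_selfadjoint positive bounded_linear_add bounded_linear_funpow
      A_selfadjoint_add positive_op_clinear A_selfadjoint_funpow)
    (auto intro: bounded_linear_RS bounded_linear_SR A_selfadjoint_RS A_selfadjoint_SR)

lemma pow_add_pow_le_opnormA: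
  assumes "V \<in> {R \<circ> S, S \<circ> R}" "W \<in> {R \<circ> S, S \<circ> R}" "normA A z = 1"
  shows "Re (cinner (A (V z)) z) ^ i + Re (cinner (A (W z)) z) ^ j
           \<le> opnormA A (\<lambda>x. (V ^^ i) x + (W ^^ j) x)"
proof -
  have hoelder: "Re (cinner (A (U z)) z) ^ k \<le> Re (cinner (A ((U ^^ k) z)) z)"
    if "U \<in> {R \<circ> S, S \<circ> R}" for U k
    using that hoelder_mccarthy[OF positive clinear_RS A_selfadjoint_RS nonneg_RS assms(3)]
      hoelder_mccarthy[OF positive clinear_SR A_selfadjoint_SR nonneg_SR assms(3)] by blast
  have "Re (cinner (A (V z)) z) ^ i + Re (cinner (A (W z)) z) ^ j
      \<le> Re (cinner (A ((V ^^ i) z + (W ^^ j) z)) z)"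
    using hoelder[OF assms(1), of i] hoelder[OF assms(2), of j]
    by (simp add: clinear_add[OF positive_op_clinear[OF positive]] cinner_add_left)
  also have "\<dots> \<le> opnormA A (\<lambda>x. (V ^^ i) x + (W ^^ j) x)"
    using Re_cinner_le_opnormA[OF positive A_bounded_funpow_add[OF assms(1,2)] assms(3)] by simp
  finally show ?thesis .
qed

lemma cmod_innerA_sq_le:
  assumes "normA A z = 1"
  shows "(cmod (innerA A (S z) z))\<^sup>2 \<le> Re (cinner (A ((R \<circ> S) z)) z)"
    and "(cmod (innerA A (S z) z))\<^sup>2 \<le> Re (cinner (A ((S \<circ> R) z)) z)"
  using cauchy_schwarz_A[OF positive, of "S z" z] cauchy_schwarz_A[OF positive, of z "R z"]
  unfolding innerA_def Re_cinner_eq_1_if_normA_eq_1[OF positive assms]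
  by (simp_all add: adjoint adjoint_sym)

lemma normA_pow_four: "normA A (S z) ^ 4 = (Re (cinner (A ((R \<circ> S) z)) z))\<^sup>2"
proof -
  have "normA A (S z) ^ 4 = ((normA A (S z))\<^sup>2)\<^sup>2" by (simp flip: power_mult)
  then show ?thesis using normA_sq[OF positive, of "S z"] by (simp add: adjoint_sym)
qed

lemma dwA_term_pow_le:
  assumes "normA A z = 1" "1 \<le> n"
  shows "sqrt ((cmod (innerA A (S z) z))\<^sup>2 + normA A (S z) ^ 4) ^ (4 * n)
     \<le> 4 ^ (n - 1) * opnormA A (\<lambda>x. ((R \<circ> S) ^^ n) x + ((R \<circ> S) ^^ (2 * n)) x)
                   * opnormA A (\<lambda>x. ((S \<circ> R) ^^ n) x + ((R \<circ> S) ^^ (2 * n)) x)"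
    (is "_ \<le> _ * ?P * ?Q")
proof -
  define a where "a = Re (cinner (A ((R \<circ> S) z)) z)"
  define b where "b = Re (cinner (A ((S \<circ> R) z)) z)"
  define c where "c = (cmod (innerA A (S z) z))\<^sup>2"
  have "0 \<le> a" "0 \<le> b" "0 \<le> c"
    using nonneg_RS nonneg_SR unfolding a_def b_def c_def nonneg_op_def by simp_all
  have "sqrt t ^ (4 * n) = (sqrt t ^ 2) ^ (2 * n)" for t by (simp flip: power_mult)
  then have "sqrt ((cmod (innerA A (S z) z))\<^sup>2 + normA A (S z) ^ 4) ^ (4 * n)
      = (sqrt (c + a\<^sup>2) ^ 2) ^ (2 * n)"
    unfolding c_def a_def normA_pow_four .
  also have "\<dots> = ((c + a\<^sup>2)\<^sup>2) ^ n" using \<open>0 \<le> c\<close> by (simp add: power_mult)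
  also have "\<dots> \<le> ((a + a\<^sup>2) * (b + a\<^sup>2)) ^ n"
    using cmod_innerA_sq_le[OF assms(1)] \<open>0 \<le> c\<close> unfolding a_def b_def c_def
    by (intro power_mono sq_add_le_mult_add) simp_all
  also have "\<dots> = (a + a\<^sup>2) ^ n * (b + a\<^sup>2) ^ n" by (simp add: power_mult_distrib)
  also have "\<dots> \<le> (2 ^ (n - 1) * (a ^ n + a ^ (2 * n))) * (2 ^ (n - 1) * (b ^ n + a ^ (2 * n)))"
    using power_add_le_two_pow[of _ "a\<^sup>2" n] \<open>0 \<le> a\<close> \<open>0 \<le> b\<close> assms(2)
    by (intro mult_mono) (simp_all add: power_mult)
  also have "\<dots> \<le> (2 ^ (n - 1) * ?P) * (2 ^ (n - 1) * ?Q)"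
    using pow_add_pow_le_opnormA[OF _ _ assms(1), of "R \<circ> S" "R \<circ> S" n "2 * n"]
      pow_add_pow_le_opnormA[OF _ _ assms(1), of "S \<circ> R" "R \<circ> S" n "2 * n"]
      opnormA_nonneg[OF A_bounded_funpow_add, of "R \<circ> S" "R \<circ> S" n "2 * n"] \<open>0 \<le> a\<close> \<open>0 \<le> b\<close>
    unfolding a_def b_def by (intro mult_mono mult_left_mono) simp_all
  also have "\<dots> = 4 ^ (n - 1) * ?P * ?Q"
    by (simp add: power_mult_distrib[symmetric] mult_ac)
  finally show ?thesis .
qed

lemma dwA_pow_le:
  assumes "1 \<le> n"
  shows "dwA A S ^ (4 * n)
      \<le> 4 ^ (n - 1) * opnormA A (\<lambda>x. ((R \<circ> S) ^^ n) x + ((R \<circ> S) ^^ (2 * n)) x)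
                    * opnormA A (\<lambda>x. ((S \<circ> R) ^^ n) x + ((R \<circ> S) ^^ (2 * n)) x)"
  unfolding dwA_def
proof (rule Sup_insert_zero_pow_le)
  show "1 \<le> 4 * n" using assms by simp
  show "0 \<le> 4 ^ (n - 1) * opnormA A (\<lambda>x. ((R \<circ> S) ^^ n) x + ((R \<circ> S) ^^ (2 * n)) x)
                  * opnormA A (\<lambda>x. ((S \<circ> R) ^^ n) x + ((R \<circ> S) ^^ (2 * n)) x)"
    by (intro mult_nonneg_nonneg opnormA_nonneg A_bounded_funpow_add) simp_all
next
  fix x
  assume "x \<in> (\<lambda>z. sqrt ((cmod (innerA A (S z) z))\<^sup>2 + (normA A (S z)) ^ 4)) ` {z. normA A z = 1}"
  then obtain z where "normA A z = 1"
    and x: "x = sqrt ((cmod (innerA A (S z) z))\<^sup>2 + (normA A (S z)) ^ 4)"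
    by blast
  show "0 \<le> x" unfolding x by simp
  show "x ^ (4 * n) \<le> 4 ^ (n - 1) * opnormA A (\<lambda>x. ((R \<circ> S) ^^ n) x + ((R \<circ> S) ^^ (2 * n)) x)
                  * opnormA A (\<lambda>x. ((S \<circ> R) ^^ n) x + ((R \<circ> S) ^^ (2 * n)) x)"
    unfolding x by (rule dwA_term_pow_le[OF \<open>normA A z = 1\<close> assms])
qed

end

lemma A_adjoint_pair_if_BA:
  fixes A S :: "'a::{complex_inner,complete_space} \<Rightarrow> 'a"
  assumes "positive_op A" "S \<in> BA A"
  obtains R where "A_adjoint_pair A S R" and "\<And>x. A (sharpA A S x) = A (R x)"
proof -
  have "bounded_clinear S" using assms(2) unfolding BA_def by blast
  obtain R where "bounded_clinear R" and "A \<circ> R = adj S \<circ> A"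
    using assms(2) unfolding BA_def by blast
  have AR: "A (R x) = adj S (A x)" for x
    using fun_cong[OF \<open>A \<circ> R = adj S \<circ> A\<close>, of x] by simp
  have herm: "cinner (A x) y = cinner x (A y)" for x y
    using positive_op_hermitian[OF assms(1)] unfolding hermitian_def by blast
  have "cinner (A (S x)) y = cinner (A x) (R y)" for x y
  proof -
    have "cinner (A (S x)) y = cinner x (adj S (A y))"
      by (simp add: herm cinner_adj[OF \<open>bounded_clinear S\<close>])
    also have "\<dots> = cinner (A x) (R y)" by (simp add: herm AR)
    finally show ?thesis .
  qed
  then have "A_adjoint_pair A S R"
    unfolding A_adjoint_pair_def using assms(1) \<open>bounded_clinear S\<close> \<open>bounded_clinear R\<close> by blast
  moreover have "A (sharpA A S x) = A (R x)" for x
    using mp_inv_range[of A "R x"] assms(1) unfolding sharpA_def positive_op_def by (simp add: AR)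
  ultimately show ?thesis by (rule that)
qed

theorem theorem2p25:
  fixes A S :: "'a::{complex_inner, complete_space} \<Rightarrow> 'a" and n :: nat
  assumes "positive_op A"
    and "S \<in> BA A"
    and "n \<ge> 1"
  shows "(dwA A S) ^ (4 * n) \<le>
           4 ^ (n - 1)
           * opnormA A (\<lambda>x. ((sharpA A S \<circ> S) ^^ n) x + ((sharpA A S \<circ> S) ^^ (2 * n)) x)
           * opnormA A (\<lambda>x. ((S \<circ> sharpA A S) ^^ n) x + ((sharpA A S \<circ> S) ^^ (2 * n)) x)"
proof -
  obtain R where "A_adjoint_pair A S R" and sharp: "\<And>x. A (sharpA A S x) = A (R x)"
    using A_adjoint_pair_if_BA[OF assms(1,2)] by blast
  interpret A_adjoint_pair A S R by fact
  have additive: "A (u + v) = A u + A v" for u v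
    by (rule clinear_add[OF positive_op_clinear[OF assms(1)]])
  have "opnormA A (\<lambda>x. ((sharpA A S \<circ> S) ^^ n) x + ((sharpA A S \<circ> S) ^^ (2 * n)) x)
      = opnormA A (\<lambda>x. ((R \<circ> S) ^^ n) x + ((R \<circ> S) ^^ (2 * n)) x)"
    by (rule opnormA_cong[OF assms(1)]) (simp add: additive A_funpow_cong[OF sharp])
  moreover have "opnormA A (\<lambda>x. ((S \<circ> sharpA A S) ^^ n) x + ((sharpA A S \<circ> S) ^^ (2 * n)) x)
      = opnormA A (\<lambda>x. ((S \<circ> R) ^^ n) x + ((R \<circ> S) ^^ (2 * n)) x)"
    by (rule opnormA_cong[OF assms(1)]) (simp add: additive A_funpow_cong[OF sharp])
  moreover note dwA_pow_le[OF assms(3)]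
  ultimately show ?thesis by simp
qed

end
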